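(* Fix a characteristic generator $\tau$ such that $Y\sim\mathrm E_1(0,1,\tau)$ has a continuous distribution function $F$. For each $n\ge2$ let $\mathbf X^{(n)}\sim\mathrm E_n(\boldsymbol\mu^{(n)},\Sigma^{(n)},\tau)$ with $\mathbf 1^\top\Sigma^{(n)}\mathbf 1>0$, and suppose $\lim_{n\to\infty}\mathrm{AC}_{\Sigma^{(n)}}=0$. Then $\lim_{n\to\infty}\mathrm{DQ}^{\mathrm{VaR}}_\alpha(\mathbf X^{(n)})=0$ for every $\alpha\in(0,1/2)$, and, if in addition $\mathbb E|Y|<\infty$, $\lim_{n\to\infty}\mathrm{DQ}^{\mathrm{ES}}_\beta(\mathbf X^{(n)})=0$ for every $\beta\in(0,1)$.
   Context: Let $(\Omega,\mathcal F,\mathbb P)$ be an atomless probability space. For $\alpha\in[0,1)$ and a random variable $X$, $\mathrm{VaR}_\alpha(X)=\inf\{x\in\mathbb R:\mathbb P(X\le x)\ge 1-\alpha\}$; for $\alpha\in(0,1)$ and integrable $X$, $\mathrm{ES}_\alpha(X)=\frac1\alpha\int_0^\alpha\mathrm{VaR}_\beta(X)\,\mathrm d\beta$. For $\rho\in\{\mathrm{VaR},\mathrm{ES}\}$, $\alpha\in(0,1)$ and $\mathbf X=(X_1,\dots,X_n)$ (integrable components when $\rho=\mathrm{ES}$), $\mathrm{DQ}^\rho_\alpha(\mathbf X)=\alpha^*/\alpha$, where $\alpha^*=\inf\{\beta\in(0,1):\rho_\beta(\sum_{i=1}^nX_i)\le\sum_{i=1}^n\rho_\alpha(X_i)\}$,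 with $\inf\emptyset=1$. A random vector $\mathbf X$ in $\mathbb R^n$ has elliptical distribution $\mathrm E_n(\boldsymbol\mu,\Sigma,\tau)$, with $\boldsymbol\mu\in\mathbb R^n$, $\Sigma$ positive semi-definite and nonzero, and $\tau:[0,\infty)\to\mathbb R$, if $\mathbb E[\exp(\mathrm i\,\mathbf t^\top\mathbf X)]=\exp(\mathrm i\,\mathbf t^\top\boldsymbol\mu)\,\tau(\mathbf t^\top\Sigma\mathbf t)$ for all $\mathbf t\in\mathbb R^n$. For $\Sigma=(\sigma_{ij})_{n\times n}$ with $\sigma_i=\sqrt{\sigma_{ii}}$, the average correlation is $\mathrm{AC}_\Sigma=\sum_{i,j=1}^n\sigma_{ij}/(\sum_{i=1}^n\sigma_i)^2$. *)

theory Defs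
  imports "HOL-Probability.Probability"
begin

definition atomless :: "'a measure \<Rightarrow> bool" where
  "atomless M \<longleftrightarrow> (\<forall>A\<in>sets M. measure M A > 0 \<longrightarrow>
      (\<exists>B\<in>sets M. B \<subseteq> A \<and> 0 < measure M B \<and> measure M B < measure M A))"

definition VaR :: "'a measure \<Rightarrow> real \<Rightarrow> ('a \<Rightarrow> real) \<Rightarrow> real" where
  "VaR M \<alpha> X = Inf {x. measure M {\<omega>\<in>space M. X \<omega> \<le> x} \<ge> 1 - \<alpha>}"

definition ES :: "'a measure \<Rightarrow> real \<Rightarrow> ('a \<Rightarrow> real) \<Rightarrow> real" where
  "ES M \<alpha> X = (1 / \<alpha>) * (LBINT \<beta>=0..\<alpha>. VaR M \<beta> X)"

definition DQ :: "(real \<Rightarrow> ('a \<Rightarrow> real) \<Rightarrow> real) \<Rightarrow> real \<Rightarrow> nat \<Rightarrow> (nat \<Rightarrow> 'a \<Rightarrow> real) \<Rightarrow> real" where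
  "DQ \<rho> \<alpha> n X =
     (let S = {\<beta>\<in>{0<..<1}. \<rho> \<beta> (\<lambda>\<omega>. \<Sum>i<n. X i \<omega>) \<le> (\<Sum>i<n. \<rho> \<alpha> (X i))}
      in (if S = {} then 1 else Inf S) / \<alpha>)"

definition qform :: "nat \<Rightarrow> (nat \<Rightarrow> nat \<Rightarrow> real) \<Rightarrow> (nat \<Rightarrow> real) \<Rightarrow> real" where
  "qform n \<Sigma> t = (\<Sum>i<n. \<Sum>j<n. t i * \<Sigma> i j * t j)"

definition psd :: "nat \<Rightarrow> (nat \<Rightarrow> nat \<Rightarrow> real) \<Rightarrow> bool" where
  "psd n \<Sigma> \<longleftrightarrow> (\<forall>i<n. \<forall>j<n. \<Sigma> i j = \<Sigma> j i) \<and> (\<forall>t. qform n \<Sigma> t \<ge> 0)"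

definition elliptical ::
  "'a measure \<Rightarrow> nat \<Rightarrow> (nat \<Rightarrow> 'a \<Rightarrow> real) \<Rightarrow> (nat \<Rightarrow> real) \<Rightarrow> (nat \<Rightarrow> nat \<Rightarrow> real)
     \<Rightarrow> (real \<Rightarrow> real) \<Rightarrow> bool" where
  "elliptical M n X \<mu> \<Sigma> \<tau> \<longleftrightarrow>
     (\<forall>i<n. X i \<in> borel_measurable M) \<and> psd n \<Sigma> \<and> (\<exists>i<n. \<exists>j<n. \<Sigma> i j \<noteq> 0) \<and>
     (\<forall>t. (CLINT \<omega>|M. iexp (\<Sum>i<n. t i * X i \<omega>))
            = iexp (\<Sum>i<n. t i * \<mu> i) * complex_of_real (\<tau> (qform n \<Sigma> t)))"

definition AC :: "nat \<Rightarrow> (nat \<Rightarrow> nat \<Rightarrow> real) \<Rightarrow> real" where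
  "AC n \<Sigma> = (\<Sum>i<n. \<Sum>j<n. \<Sigma> i j) / (\<Sum>i<n. sqrt (\<Sigma> i i))^2"

end

theory Submission
  imports Defs
begin

text \<open>
  A linear combination \<open>t\<^sup>T X\<close> of an elliptical vector has the law of
  \<open>t\<^sup>T \<mu> + sqrt (t\<^sup>T \<Sigma> t) Y\<close>, where \<open>Y\<close> has characteristic function \<open>\<tau> (u\<^sup>2)\<close>; as VaR
  and ES are law invariant and affinely equivariant, \<open>\<rho>\<^sub>\<beta> (\<Sum>X\<^sub>i) \<le> \<Sum>\<rho>\<^sub>\<alpha> (X\<^sub>i)\<close>
  becomes \<open>sqrt (AC\<^sub>\<Sigma>) \<rho>\<^sub>\<beta> (Y) \<le> \<rho>\<^sub>\<alpha> (Y)\<close>. Since \<open>Y\<close> is symmetric with continuous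
  distribution function, \<open>VaR\<^sub>\<alpha> (Y) > 0\<close> for \<open>\<alpha> < 1/2\<close>, and \<open>ES\<^sub>\<beta> (Y) > 0\<close> for all \<open>\<beta>\<close>
  because the quantile function of \<open>Y\<close> integrates to its mean \<open>0\<close>. So once \<open>AC\<^sub>\<Sigma>\<close>
  is small, any fixed level \<open>\<beta> \<in> (0,1)\<close> satisfies the inequality, and \<open>\<alpha>\<^sup>* \<rightarrow> 0\<close>.
\<close>

lemma qform_scale: "qform n S (\<lambda>i. c * t i) = c\<^sup>2 * qform n S t"
  unfolding qform_def by (simp add: sum_distrib_left power2_eq_square mult_ac)

lemma qform_const_one: "qform n S (\<lambda>_. 1) = (\<Sum>i<n. \<Sum>j<n. S i j)"
  by (simp add: qform_def)

lemma sum_of_bool_eq_mult: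
  fixes f :: "nat \<Rightarrow> real"
  assumes "i < n"
  shows "(\<Sum>k<n. of_bool (k = i) * f k) = f i"
proof -
  have "(\<Sum>k<n. of_bool (k = i) * f k) = (\<Sum>k<n. if k = i then f k else 0)"
    by (intro sum.cong) auto
  then show ?thesis
    using assms by simp
qed

lemma sum_two_points:
  fixes f :: "nat \<Rightarrow> real"
  assumes "i < n" "j < n"
  shows "(\<Sum>k<n. (x * of_bool (k = i) + y * of_bool (k = j)) * f k) = x * f i + y * f j"
  using assms sum_of_bool_eq_mult
  by (simp add: distrib_right sum.distrib mult.assoc flip: sum_distrib_left)

lemma qform_two_points:
  assumes "i < n" "j < n"
  shows "qform n S (\<lambda>k. x * of_bool (k = i) + y * of_bool (k = j))
       = x * (x * S i i + y * S i j) + y * (x * S j i + y * S j j)"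
proof -
  have "qform n S (\<lambda>k. x * of_bool (k = i) + y * of_bool (k = j))
      = (\<Sum>k<n. (x * of_bool (k = i) + y * of_bool (k = j)) *
           (\<Sum>l<n. (x * of_bool (l = i) + y * of_bool (l = j)) * S k l))"
    unfolding qform_def by (simp add: sum_distrib_left mult_ac)
  then show ?thesis
    using assms by (simp only: sum_two_points)
qed

lemma qform_unit_vector: "i < n \<Longrightarrow> qform n S (\<lambda>k. of_bool (k = i)) = S i i"
  using qform_two_points[of i n i S 1 0] by simp

lemma psd_diag_nonneg:
  assumes "psd n S" "i < n"
  shows "S i i \<ge> 0"
proof -
  have "0 \<le> qform n S (\<lambda>k. of_bool (k = i))"
    using assms(1) unfolding psd_def by blast
  also have "\<dots> = S i i"
    by (rule qform_unit_vector[OF assms(2)])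
  finally show ?thesis .
qed

lemma psd_offdiag_eq_0:
  assumes "psd n S" "i < n" "j < n" "S i i = 0" "S j j = 0"
  shows "S i j = 0"
proof -
  have sym: "S j i = S i j"
    using assms(1-3) unfolding psd_def by auto
  have "0 \<le> 2 * c * S i j" for c
  proof -
    have "0 \<le> qform n S (\<lambda>k. 1 * of_bool (k = i) + c * of_bool (k = j))"
      using assms(1) unfolding psd_def by blast
    also have "\<dots> = 2 * c * S i j"
      unfolding qform_two_points[OF assms(2,3)] using assms(4,5) sym by (simp add: algebra_simps)
    finally show ?thesis .
  qed
  from this[of 1] this[of "-1"] show ?thesis by simp
qed

lemma psd_ex_diag_pos:
  assumes "psd n S" "(\<Sum>i<n. \<Sum>j<n. S i j) \<noteq> 0"
  obtains i where "i < n" "S i i > 0"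
proof -
  have "\<exists>i<n. S i i \<noteq> 0"
  proof (rule ccontr)
    assume "\<not> ?thesis"
    then have "S i j = 0" if "i < n" "j < n" for i j
      using psd_offdiag_eq_0[OF assms(1) that] that by auto
    then show False
      using assms(2) by simp
  qed
  then show thesis
    using psd_diag_nonneg[OF assms(1)] that by (auto simp: order.strict_iff_order)
qed

lemma elliptical_charD:
  "elliptical M n X \<mu> S \<tau> \<Longrightarrow> (CLINT \<omega>|M. iexp (\<Sum>i<n. t i * X i \<omega>))
     = iexp (\<Sum>i<n. t i * \<mu> i) * complex_of_real (\<tau> (qform n S t))"
  unfolding elliptical_def by blast

lemma elliptical_lincomb_measurable:
  "elliptical M n X \<mu> S \<tau> \<Longrightarrow> (\<lambda>\<omega>. \<Sum>i<n. t i * X i \<omega>) \<in> borel_measurable M"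
  unfolding elliptical_def by (intro borel_measurable_sum borel_measurable_times) auto

lemma elliptical_qform_nonneg: "elliptical M n X \<mu> S \<tau> \<Longrightarrow> qform n S t \<ge> 0"
  unfolding elliptical_def psd_def by blast

lemma char_distr_affine:
  assumes "real_distribution N"
  shows "char (distr N borel (\<lambda>y. a + b * y)) u = iexp (u * a) * char N (b * u)"
proof -
  interpret real_distribution N by fact
  have "char (distr N borel (\<lambda>y. a + b * y)) u = (CLINT y|N. iexp (u * a) * iexp ((b * u) * y))"
    unfolding char_def by (simp add: integral_distr algebra_simps flip: exp_add)
  also have "\<dots> = iexp (u * a) * char N (b * u)"
    unfolding char_def by simp
  finally show ?thesis .
qed

lemma char_distr_elliptical_lincomb:
  assumes "elliptical M n X \<mu> S \<tau>"
  shows "char (distr M borel (\<lambda>\<omega>. \<Sum>i<n. t i * X i \<omega>)) u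
       = iexp (u * (\<Sum>i<n. t i * \<mu> i)) * complex_of_real (\<tau> (u\<^sup>2 * qform n S t))"
proof -
  have "char (distr M borel (\<lambda>\<omega>. \<Sum>i<n. t i * X i \<omega>)) u
      = (CLINT \<omega>|M. iexp (\<Sum>i<n. (u * t i) * X i \<omega>))"
    unfolding char_def using elliptical_lincomb_measurable[OF assms]
    by (simp add: integral_distr sum_distrib_left mult_ac)
  also have "\<dots> = iexp (\<Sum>i<n. (u * t i) * \<mu> i) * complex_of_real (\<tau> (qform n S (\<lambda>i. u * t i)))"
    by (rule elliptical_charD[OF assms])
  finally show ?thesis
    by (simp add: qform_scale sum_distrib_left mult_ac)
qed

lemma distr_elliptical_lincomb:
  assumes "prob_space M" "elliptical M n X \<mu> S \<tau>" "real_distribution N"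
    and char_N: "\<And>u. char N u = complex_of_real (\<tau> (u\<^sup>2))"
  shows "distr M borel (\<lambda>\<omega>. \<Sum>i<n. t i * X i \<omega>)
       = distr N borel (\<lambda>y. (\<Sum>i<n. t i * \<mu> i) + sqrt (qform n S t) * y)"
proof (rule Levy_uniqueness)
  interpret prob_space M by fact
  interpret N: real_distribution N by fact
  show "real_distribution (distr M borel (\<lambda>\<omega>. \<Sum>i<n. t i * X i \<omega>))"
    using elliptical_lincomb_measurable[OF assms(2)] by simp
  show "real_distribution (distr N borel (\<lambda>y. (\<Sum>i<n. t i * \<mu> i) + sqrt (qform n S t) * y))"
    by simp
  have "(sqrt (qform n S t) * u)\<^sup>2 = u\<^sup>2 * qform n S t" for u
    using elliptical_qform_nonneg[OF assms(2)] by (simp add: power_mult_distrib)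
  then show "char (distr M borel (\<lambda>\<omega>. \<Sum>i<n. t i * X i \<omega>))
      = char (distr N borel (\<lambda>y. (\<Sum>i<n. t i * \<mu> i) + sqrt (qform n S t) * y))"
    by (simp add: fun_eq_iff char_distr_elliptical_lincomb[OF assms(2)] char_distr_affine[OF assms(3)] char_N)
qed

lemma elliptical_standard_distribution:
  assumes "prob_space M" "elliptical M n X \<mu> S \<tau>" "qform n S t > 0"
  obtains N where "real_distribution N" "\<And>u. char N u = complex_of_real (\<tau> (u\<^sup>2))"
proof
  interpret prob_space M by fact
  define m where "m = (\<Sum>i<n. t i * \<mu> i)"
  define s where "s = sqrt (qform n S t)"
  have s: "s > 0" "s\<^sup>2 = qform n S t"
    using assms(3) by (auto simp: s_def)
  define Z where "Z = distr M borel (\<lambda>\<omega>. \<Sum>i<n. t i * X i \<omega>)"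
  have Z: "real_distribution Z"
    using elliptical_lincomb_measurable[OF assms(2)] by (simp add: Z_def)
  then interpret Z: real_distribution Z .
  show "real_distribution (distr Z borel (\<lambda>z. - m / s + (1 / s) * z))"
    by simp
  fix u
  have "char (distr Z borel (\<lambda>z. - m / s + (1 / s) * z)) u = iexp (u * (- m / s)) * char Z (1 / s * u)"
    by (rule char_distr_affine[OF Z])
  also have "char Z (1 / s * u) = iexp (1 / s * u * m) * complex_of_real (\<tau> ((1 / s * u)\<^sup>2 * qform n S t))"
    unfolding Z_def m_def by (rule char_distr_elliptical_lincomb[OF assms(2)])
  also have "(1 / s * u)\<^sup>2 * qform n S t = u\<^sup>2"
    using s by (simp add: power_divide flip: s(2))
  also have "iexp (u * (- m / s)) * (iexp (1 / s * u * m) * complex_of_real (\<tau> (u\<^sup>2)))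
      = iexp (u * (- m / s) + 1 / s * u * m) * complex_of_real (\<tau> (u\<^sup>2))"
    by (simp only: of_real_add distrib_left exp_add mult.assoc)
  also have "u * (- m / s) + 1 / s * u * m = 0"
    by simp
  finally show "char (distr Z borel (\<lambda>z. - m / s + (1 / s) * z)) u = complex_of_real (\<tau> (u\<^sup>2))"
    by simp
qed

lemma VaR_id_eq_Inf_cdf:
  assumes "real_distribution N"
  shows "VaR N \<gamma> (\<lambda>y. y) = Inf {y. 1 - \<gamma> \<le> cdf N y}"
proof -
  interpret real_distribution N by fact
  show ?thesis
    unfolding VaR_def cdf_def by (simp add: atMost_def)
qed

lemma VaR_id_le_iff:
  assumes "real_distribution N" "0 < \<gamma>" "\<gamma> < 1"
  shows "VaR N \<gamma> (\<lambda>y. y) \<le> x \<longleftrightarrow> 1 - \<gamma> \<le> cdf N x"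
proof -
  interpret cdf_distribution N
    using assms(1) by (simp add: cdf_distribution_def)
  show ?thesis
    unfolding VaR_id_eq_Inf_cdf[OF assms(1)] using pseudoinverse[of "1 - \<gamma>" x] assms(2,3) by auto
qed

lemma VaR_distr_affine:
  assumes "prob_space M" "Z \<in> borel_measurable M" "real_distribution N"
    and law: "distr M borel Z = distr N borel (\<lambda>y. a + b * y)"
    and "b \<ge> 0" "0 < \<gamma>" "\<gamma> < 1"
  shows "VaR M \<gamma> Z = a + b * VaR N \<gamma> (\<lambda>y. y)"
proof -
  interpret N: real_distribution N by fact
  define q where "q = VaR N \<gamma> (\<lambda>y. y)"
  have q: "1 - \<gamma> \<le> cdf N y \<longleftrightarrow> q \<le> y" for y
    unfolding q_def using VaR_id_le_iff[OF assms(3,6,7)] by simp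
  have F: "measure M {\<omega>\<in>space M. Z \<omega> \<le> x} = measure N {y. a + b * y \<le> x}" for x
  proof -
    have "measure M {\<omega>\<in>space M. Z \<omega> \<le> x} = measure (distr M borel Z) {..x}"
      using assms(2) by (subst measure_distr) (auto intro!: arg_cong[where f="measure M"])
    also have "\<dots> = measure N {y. a + b * y \<le> x}"
      unfolding law by (subst measure_distr) (auto intro!: arg_cong[where f="measure N"])
    finally show ?thesis .
  qed
  have "1 - \<gamma> \<le> measure M {\<omega>\<in>space M. Z \<omega> \<le> x} \<longleftrightarrow> a + b * q \<le> x" for x
  proof (cases "b > 0")
    case True
    then have "{y. a + b * y \<le> x} = {..(x - a) / b}"
      by (auto simp: field_simps)
    then show ?thesis
      using F q[of "(x - a) / b"] True by (simp add: cdf_def pos_le_divide_eq algebra_simps)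
  next
    case False
    then have "b = 0"
      using assms(5) by simp
    then have "{y. a + b * y \<le> x} = (if a \<le> x then space N else {})"
      by simp
    then show ?thesis
      using F assms(6,7) N.prob_space \<open>b = 0\<close> by simp
  qed
  then have "{x. 1 - \<gamma> \<le> measure M {\<omega>\<in>space M. Z \<omega> \<le> x}} = {a + b * q..}"
    unfolding atLeast_def by (rule Collect_cong)
  then have "VaR M \<gamma> Z = a + b * q"
    by (simp add: VaR_def)
  then show ?thesis
    by (simp add: q_def)
qed

lemma VaR_elliptical_lincomb:
  assumes "prob_space M" "elliptical M n X \<mu> S \<tau>" "real_distribution N"
    and "\<And>u. char N u = complex_of_real (\<tau> (u\<^sup>2))" "0 < \<gamma>" "\<gamma> < 1"
  shows "VaR M \<gamma> (\<lambda>\<omega>. \<Sum>i<n. t i * X i \<omega>)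
       = (\<Sum>i<n. t i * \<mu> i) + sqrt (qform n S t) * VaR N \<gamma> (\<lambda>y. y)"
  using assms elliptical_qform_nonneg[OF assms(2)]
  by (intro VaR_distr_affine elliptical_lincomb_measurable distr_elliptical_lincomb) auto

lemma ES_eq_affine_if_VaR_eq_affine:
  assumes VaR: "\<And>\<delta>. 0 < \<delta> \<Longrightarrow> \<delta> < \<gamma> \<Longrightarrow> VaR M \<delta> Z = a + b * VaR N \<delta> W"
    and int: "interval_lebesgue_integrable lborel 0 \<gamma> (\<lambda>\<delta>. VaR N \<delta> W)" and "0 < \<gamma>"
  shows "ES M \<gamma> Z = a + b * ES N \<gamma> W"
proof -
  have "(LBINT \<delta>=0..\<gamma>. VaR M \<delta> Z) = (LBINT \<delta>=0..\<gamma>. a + b * VaR N \<delta> W)"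
    using VaR \<open>0 < \<gamma>\<close> by (intro interval_lebesgue_integral_cong) (auto simp: einterval_iff)
  also have "\<dots> = \<gamma> * a + b * (LBINT \<delta>=0..\<gamma>. VaR N \<delta> W)"
    using int by (subst interval_lebesgue_integral_add(2)) (auto simp: zero_ereal_def)
  finally show ?thesis
    unfolding ES_def using \<open>0 < \<gamma>\<close> by (simp add: field_simps)
qed

lemma
  assumes "real_distribution N"
  shows measurable_VaR_id: "(\<lambda>\<gamma>. VaR N \<gamma> (\<lambda>y. y)) \<in> borel_measurable (restrict_space lborel {0<..<1})"
    and distr_VaR_id_uniform: "distr (restrict_space lborel {0<..<1}) borel (\<lambda>\<gamma>. VaR N \<gamma> (\<lambda>y. y)) = N"
proof -
  interpret cdf_distribution N
    using assms by (simp add: cdf_distribution_def)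
  let ?U = "restrict_space lborel {0<..<1::real}"
  have VaR_I: "VaR N \<gamma> (\<lambda>y. y) = I (1 - \<gamma>)" for \<gamma>
    by (simp add: VaR_id_eq_Inf_cdf[OF assms])
  have "(\<lambda>\<gamma>. 1 - \<gamma>) \<in> measurable ?U (restrict_space borel {0<..<1})"
    by (intro measurable_restrict_space3) auto
  then show meas: "(\<lambda>\<gamma>. VaR N \<gamma> (\<lambda>y. y)) \<in> borel_measurable ?U"
    unfolding VaR_I by (rule measurable_compose[OF _ measurable_CI])
  show "distr ?U borel (\<lambda>\<gamma>. VaR N \<gamma> (\<lambda>y. y)) = N"
  proof (rule cdf_unique)
    interpret U: prob_space ?U
      by (auto simp: emeasure_restrict_space space_restrict_space intro!: prob_spaceI)
    show "real_distribution (distr ?U borel (\<lambda>\<gamma>. VaR N \<gamma> (\<lambda>y. y)))"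
      using meas by simp
    show "real_distribution N" by fact
    show "cdf (distr ?U borel (\<lambda>\<gamma>. VaR N \<gamma> (\<lambda>y. y))) = cdf N"
    proof
      fix x
      have "(\<lambda>\<gamma>. VaR N \<gamma> (\<lambda>y. y)) -` {..x} \<inter> space ?U = {\<gamma>\<in>{0<..<1}. 1 - C x \<le> \<gamma>}"
        using VaR_id_le_iff[OF assms] by (auto simp: space_restrict_space)
      then have "cdf (distr ?U borel (\<lambda>\<gamma>. VaR N \<gamma> (\<lambda>y. y))) x = measure ?U {\<gamma>\<in>{0<..<1}. 1 - C x \<le> \<gamma>}"
        unfolding cdf_def by (subst measure_distr[OF meas]) auto
      also have "\<dots> = measure lborel {\<gamma>\<in>{0<..<1}. 1 - C x \<le> \<gamma>}"
        by (subst measure_restrict_space) auto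
      also have "\<dots> = measure lborel {1 - C x<..<1}"
        using cdf_bounded_prob[of x] AE_lborel_singleton[of "1 - C x"]
        by (auto intro!: arg_cong[where f=enn2real] emeasure_eq_AE simp: measure_def)
      also have "\<dots> = C x"
        using cdf_nonneg[of x] by simp
      finally show "cdf (distr ?U borel (\<lambda>\<gamma>. VaR N \<gamma> (\<lambda>y. y))) x = C x" .
    qed
  qed
qed

lemma set_integral_pos:
  fixes f :: "'a \<Rightarrow> real"
  assumes "set_integrable M A f" "A \<in> sets M" "emeasure M A > 0" "\<And>x. x \<in> A \<Longrightarrow> f x > 0"
  shows "(LINT x:A|M. f x) > 0"
proof -
  have int: "integrable M (\<lambda>x. indicator A x * f x)"
    using assms(1) by (simp add: set_integrable_def)
  have nonneg: "AE x in M. 0 \<le> indicator A x * f x"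
    using assms(4) by (simp add: indicator_def less_imp_le)
  have "(LINT x:A|M. f x) \<noteq> 0"
  proof
    assume "(LINT x:A|M. f x) = 0"
    then have ae: "AE x in M. indicator A x * f x = 0"
      using integral_nonneg_eq_0_iff_AE[OF int nonneg] by (simp add: set_lebesgue_integral_def)
    have "{x\<in>space M. \<not> indicator A x * f x = 0} = A"
    proof (rule set_eqI)
      fix x
      show "x \<in> {x\<in>space M. \<not> indicator A x * f x = 0} \<longleftrightarrow> x \<in> A"
        using assms(4)[of x] sets.sets_into_space[OF assms(2)] by (cases "x \<in> A") auto
    qed
    with ae have "emeasure M A = 0"
      using AE_iff_measurable[OF assms(2)] by simp
    then show False
      using assms(3) by simp
  qed
  moreover have "(LINT x:A|M. f x) \<ge> 0"
    unfolding set_lebesgue_integral_def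
    using assms(4) by (intro Bochner_Integration.integral_nonneg) (simp add: indicator_def less_imp_le)
  ultimately show ?thesis
    by simp
qed

lemma
  assumes "real_distribution N" "integrable N (\<lambda>y. y)"
  shows set_integrable_VaR_id: "set_integrable lborel {0<..<1} (\<lambda>\<gamma>. VaR N \<gamma> (\<lambda>y. y))"
    and set_integral_VaR_id: "(LINT \<gamma>:{0<..<1}|lborel. VaR N \<gamma> (\<lambda>y. y)) = integral\<^sup>L N (\<lambda>y. y)"
proof -
  let ?U = "restrict_space lborel {0<..<1::real}"
  note meas = measurable_VaR_id[OF assms(1)]
  note law = distr_VaR_id_uniform[OF assms(1)]
  have "integrable (distr ?U borel (\<lambda>\<gamma>. VaR N \<gamma> (\<lambda>y. y))) (\<lambda>y. y)"
    using assms(2) by (simp only: law)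
  then have "integrable ?U (\<lambda>\<gamma>. VaR N \<gamma> (\<lambda>y. y))"
    by (subst (asm) integrable_distr_eq[OF meas]) auto
  then show "set_integrable lborel {0<..<1} (\<lambda>\<gamma>. VaR N \<gamma> (\<lambda>y. y))"
    unfolding set_integrable_def by (subst (asm) integrable_restrict_space) auto
  have "integral\<^sup>L ?U (\<lambda>\<gamma>. VaR N \<gamma> (\<lambda>y. y)) = integral\<^sup>L (distr ?U borel (\<lambda>\<gamma>. VaR N \<gamma> (\<lambda>y. y))) (\<lambda>y. y)"
    by (subst integral_distr[OF meas]) auto
  also have "\<dots> = integral\<^sup>L N (\<lambda>y. y)"
    by (simp only: law)
  finally show "(LINT \<gamma>:{0<..<1}|lborel. VaR N \<gamma> (\<lambda>y. y)) = integral\<^sup>L N (\<lambda>y. y)"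
    unfolding set_lebesgue_integral_def by (subst (asm) integral_restrict_space) auto
qed

lemma interval_integrable_VaR_id:
  fixes \<beta> :: real
  assumes "real_distribution N" "integrable N (\<lambda>y. y)" "0 < \<beta>" "\<beta> \<le> 1"
  shows "interval_lebesgue_integrable lborel 0 \<beta> (\<lambda>\<gamma>. VaR N \<gamma> (\<lambda>y. y))"
proof -
  have "{0<..<\<beta>} \<subseteq> {0<..<1}"
    using assms(4) by auto
  then have "set_integrable lborel {0<..<\<beta>} (\<lambda>\<gamma>. VaR N \<gamma> (\<lambda>y. y))"
    by (rule set_integrable_subset[OF set_integrable_VaR_id[OF assms(1,2)], rotated]) simp
  then show ?thesis
    using assms(3) by (simp add: interval_lebesgue_integrable_def zero_ereal_def)
qed

lemma ES_elliptical_lincomb: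
  assumes "prob_space M" "elliptical M n X \<mu> S \<tau>" "real_distribution N"
    and "\<And>u. char N u = complex_of_real (\<tau> (u\<^sup>2))" "integrable N (\<lambda>y. y)" "0 < \<gamma>" "\<gamma> < 1"
  shows "ES M \<gamma> (\<lambda>\<omega>. \<Sum>i<n. t i * X i \<omega>)
       = (\<Sum>i<n. t i * \<mu> i) + sqrt (qform n S t) * ES N \<gamma> (\<lambda>y. y)"
  using assms by (intro ES_eq_affine_if_VaR_eq_affine VaR_elliptical_lincomb interval_integrable_VaR_id) auto

lemma distr_uminus_eq_if_char_even:
  assumes "real_distribution N" "\<And>u. char N (- u) = char N u"
  shows "distr N borel uminus = N"
proof (rule Levy_uniqueness)
  interpret real_distribution N by fact
  show "real_distribution (distr N borel uminus)"
    by simp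
  show "real_distribution N" by fact
  have "char (distr N borel uminus) u = char N (- u)" for u
    unfolding char_def by (simp add: integral_distr)
  then show "char (distr N borel uminus) = char N"
    using assms(2) by (simp add: fun_eq_iff)
qed

locale symmetric_distribution = real_distribution N for N :: "real measure" +
  assumes distr_uminus: "distr N borel uminus = N"
    and isCont_cdf_0: "isCont (cdf N) 0"
begin

lemma cdf_0: "cdf N 0 = 1 / 2"
proof -
  have "measure N {..0} = measure (distr N borel uminus) {..0}"
    by (simp add: distr_uminus)
  also have "\<dots> = measure N (uminus -` {..0} \<inter> space N)"
    by (rule measure_distr) auto
  also have "uminus -` {..0} \<inter> space N = space N - {..<0}"
    by auto
  also have "measure N (space N - {..<0}) = 1 - measure N {..<0}"
    by (rule prob_compl) auto
  also have "measure N {..<0} = measure N {..0}"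
  proof -
    have "measure N {0} = 0"
      using isCont_cdf_0 isCont_cdf by simp
    moreover have "measure N ({..<0} \<union> {0}) = measure N {..<0} + measure N {0}"
      by (rule finite_measure_Union) auto
    moreover have "{..<0} \<union> {0} = {..0::real}"
      by auto
    ultimately show ?thesis
      by simp
  qed
  finally show ?thesis
    by (simp add: cdf_def)
qed

lemma VaR_id_pos:
  assumes "0 < \<gamma>" "\<gamma> < 1 / 2"
  shows "VaR N \<gamma> (\<lambda>y. y) > 0"
  using VaR_id_le_iff[OF real_distribution_axioms, of \<gamma> 0] assms cdf_0 by simp

lemma VaR_id_neg:
  assumes "1 / 2 < \<gamma>" "\<gamma> < 1"
  shows "VaR N \<gamma> (\<lambda>y. y) < 0"
proof -
  have "(cdf N \<longlongrightarrow> 1 / 2) (at_left 0)"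
    using isCont_cdf_0 cdf_0 by (simp add: isCont_def filterlim_at_split)
  then have "\<forall>\<^sub>F y in at_left 0. cdf N y > 1 - \<gamma>"
    using assms by (intro order_tendstoD(1)) auto
  then obtain b where b: "b < 0" "\<And>y. b < y \<Longrightarrow> y < 0 \<Longrightarrow> cdf N y > 1 - \<gamma>"
    unfolding eventually_at_left_field by auto
  then have "cdf N (b / 2) > 1 - \<gamma>"
    by simp
  then have "VaR N \<gamma> (\<lambda>y. y) \<le> b / 2"
    using VaR_id_le_iff[OF real_distribution_axioms, of \<gamma> "b / 2"] assms by simp
  then show ?thesis
    using b(1) by linarith
qed

lemma expectation_id_eq_0:
  assumes "integrable N (\<lambda>y. y)"
  shows "expectation (\<lambda>y. y) = 0"
proof -
  have "expectation (\<lambda>y. y) = integral\<^sup>L (distr N borel uminus) (\<lambda>y. y)"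
    by (simp add: distr_uminus)
  also have "\<dots> = - expectation (\<lambda>y. y)"
    by (simp add: integral_distr)
  finally show ?thesis
    by simp
qed

lemma set_integral_VaR_id_eq_0:
  assumes "integrable N (\<lambda>y. y)"
  shows "(LINT \<gamma>:{0<..<1}|lborel. VaR N \<gamma> (\<lambda>y. y)) = 0"
  using set_integral_VaR_id[OF real_distribution_axioms assms] expectation_id_eq_0[OF assms] by simp

lemma ES_id_pos:
  assumes "integrable N (\<lambda>y. y)" "0 < \<beta>" "\<beta> < 1"
  shows "ES N \<beta> (\<lambda>y. y) > 0"
proof -
  let ?V = "\<lambda>\<gamma>. VaR N \<gamma> (\<lambda>y. y)"
  have int_0_\<beta>: "set_integrable lborel {0<..<\<beta>} ?V"
    using set_integrable_VaR_id[OF real_distribution_axioms assms(1)] by (rule set_integrable_subset) (use assms in auto)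
  have "(LINT \<gamma>:{0<..<\<beta>}|lborel. ?V \<gamma>) > 0"
  proof (cases "\<beta> \<le> 1 / 2")
    case True
    then show ?thesis
      using int_0_\<beta> assms(2) by (intro set_integral_pos) (auto intro!: VaR_id_pos)
  next
    case False
    \<comment> \<open>The quantile integrates to the mean \<open>0\<close> over \<open>(0,1)\<close> and is negative on \<open>[\<beta>,1)\<close>.\<close>
    have int_\<beta>_1: "set_integrable lborel {\<beta>..<1} ?V"
      using set_integrable_VaR_id[OF real_distribution_axioms assms(1)] by (rule set_integrable_subset) (use assms in auto)
    have split: "(LINT \<gamma>:{0<..<\<beta>}|lborel. ?V \<gamma>) + (LINT \<gamma>:{\<beta>..<1}|lborel. ?V \<gamma>)
        = (LINT \<gamma>:{0<..<1}|lborel. ?V \<gamma>)"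
    proof -
      have "{0<..<\<beta>} \<inter> {\<beta>..<1::real} = {}"
        by auto
      moreover have "{0<..<\<beta>} \<union> {\<beta>..<1::real} = {0<..<1}"
        using assms by auto
      ultimately show ?thesis
        using set_integral_Un[of "{0<..<\<beta>}" "{\<beta>..<1}" lborel ?V] int_0_\<beta> int_\<beta>_1 by simp
    qed
    have "set_integrable lborel {\<beta>..<1} (\<lambda>\<gamma>. - ?V \<gamma>)"
      using int_\<beta>_1 by (simp add: set_integrable_def)
    then have "(LINT \<gamma>:{\<beta>..<1}|lborel. - ?V \<gamma>) > 0"
      using assms False by (intro set_integral_pos) (auto intro!: VaR_id_neg)
    then show ?thesis
      using split set_integral_VaR_id_eq_0[OF assms(1)] set_integral_uminus[OF int_\<beta>_1] by linarith
  qed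
  moreover have "(LBINT \<gamma>=0..\<beta>. ?V \<gamma>) = (LINT \<gamma>:{0<..<\<beta>}|lborel. ?V \<gamma>)"
    using interval_integral_Ioo[of 0 \<beta> ?V] assms(2) by (simp add: zero_ereal_def)
  ultimately show ?thesis
    unfolding ES_def using assms(2) by simp
qed

end

lemma DQ_nonneg:
  assumes "\<alpha> > 0"
  shows "DQ \<rho> \<alpha> n X \<ge> 0"
proof -
  define S where "S = {\<beta>\<in>{0<..<1}. \<rho> \<beta> (\<lambda>\<omega>. \<Sum>i<n. X i \<omega>) \<le> (\<Sum>i<n. \<rho> \<alpha> (X i))}"
  have "Inf S \<ge> 0" if "S \<noteq> {}"
    using that by (intro cInf_greatest) (auto simp: S_def)
  then show ?thesis
    using assms unfolding DQ_def Let_def S_def[symmetric] by simp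
qed

lemma DQ_le:
  assumes "\<alpha> > 0" "0 < \<beta>" "\<beta> < 1"
    and "\<rho> \<beta> (\<lambda>\<omega>. \<Sum>i<n. X i \<omega>) \<le> (\<Sum>i<n. \<rho> \<alpha> (X i))"
  shows "DQ \<rho> \<alpha> n X \<le> \<beta> / \<alpha>"
proof -
  define S where "S = {\<beta>\<in>{0<..<1}. \<rho> \<beta> (\<lambda>\<omega>. \<Sum>i<n. X i \<omega>) \<le> (\<Sum>i<n. \<rho> \<alpha> (X i))}"
  have "\<beta> \<in> S"
    using assms(2-4) by (simp add: S_def)
  moreover have "bdd_below S"
    by (rule bdd_belowI[of _ 0]) (simp add: S_def)
  ultimately have "Inf S \<le> \<beta>"
    by (rule cInf_lower)
  then show ?thesis
    using \<open>\<beta> \<in> S\<close> assms(1) unfolding DQ_def Let_def S_def[symmetric]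
    by (auto intro: divide_right_mono)
qed

lemma eventually_DQ_le:
  fixes \<rho> :: "real \<Rightarrow> ('a \<Rightarrow> real) \<Rightarrow> real" and X :: "nat \<Rightarrow> nat \<Rightarrow> 'a \<Rightarrow> real"
    and h :: "real \<Rightarrow> real" and m s d :: "nat \<Rightarrow> real"
  assumes "\<alpha> > 0" "h \<alpha> > 0"
    and affine: "\<forall>\<^sub>F n in sequentially.
        (\<forall>\<gamma>\<in>{0<..<1}. \<rho> \<gamma> (\<lambda>\<omega>. \<Sum>i<n. X n i \<omega>) = m n + s n * h \<gamma>)
        \<and> (\<Sum>i<n. \<rho> \<alpha> (X n i)) = m n + d n * h \<alpha> \<and> d n > 0 \<and> s n \<ge> 0"
    and ratio: "(\<lambda>n. s n / d n) \<longlonglongrightarrow> 0"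
    and "0 < \<beta>" "\<beta> < 1"
  shows "\<forall>\<^sub>F n in sequentially. DQ \<rho> \<alpha> n (X n) \<le> \<beta> / \<alpha>"
proof -
  define c where "c = h \<alpha> / (\<bar>h \<beta>\<bar> + 1)"
  have "c > 0"
    using \<open>h \<alpha> > 0\<close> by (simp add: c_def)
  with ratio have "\<forall>\<^sub>F n in sequentially. s n / d n < c"
    by (rule order_tendstoD(2))
  with affine show ?thesis
  proof eventually_elim
    case (elim n)
    then have "s n \<le> c * d n"
      by (simp add: divide_less_eq less_imp_le)
    have "s n * h \<beta> \<le> s n * (\<bar>h \<beta>\<bar> + 1)"
      using elim by (intro mult_left_mono) auto
    also have "\<dots> \<le> c * d n * (\<bar>h \<beta>\<bar> + 1)"
      using \<open>s n \<le> c * d n\<close> by (intro mult_right_mono) auto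
    also have "\<dots> = d n * h \<alpha>"
      by (simp add: c_def field_simps)
    finally show ?case
      using elim assms(1,5,6) by (intro DQ_le) auto
  qed
qed

lemma DQ_tendsto_0:
  fixes \<rho> :: "real \<Rightarrow> ('a \<Rightarrow> real) \<Rightarrow> real" and X :: "nat \<Rightarrow> nat \<Rightarrow> 'a \<Rightarrow> real"
    and h :: "real \<Rightarrow> real" and m s d :: "nat \<Rightarrow> real"
  assumes "\<alpha> > 0" "h \<alpha> > 0"
    and affine: "\<forall>\<^sub>F n in sequentially.
        (\<forall>\<gamma>\<in>{0<..<1}. \<rho> \<gamma> (\<lambda>\<omega>. \<Sum>i<n. X n i \<omega>) = m n + s n * h \<gamma>)
        \<and> (\<Sum>i<n. \<rho> \<alpha> (X n i)) = m n + d n * h \<alpha> \<and> d n > 0 \<and> s n \<ge> 0"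
    and ratio: "(\<lambda>n. s n / d n) \<longlonglongrightarrow> 0"
  shows "(\<lambda>n. DQ \<rho> \<alpha> n (X n)) \<longlonglongrightarrow> 0"
proof (rule order_tendstoI)
  fix a :: real
  assume "a < 0"
  then have "a < DQ \<rho> \<alpha> n (X n)" for n
    using DQ_nonneg[OF \<open>\<alpha> > 0\<close>, of \<rho> n "X n"] by linarith
  then show "\<forall>\<^sub>F n in sequentially. a < DQ \<rho> \<alpha> n (X n)"
    by simp
next
  fix a :: real
  assume "0 < a"
  define \<beta> where "\<beta> = min (a * \<alpha> / 2) (1 / 2)"
  have \<beta>: "0 < \<beta>" "\<beta> < 1" "\<beta> / \<alpha> < a"
    using \<open>0 < a\<close> \<open>\<alpha> > 0\<close> by (auto simp: \<beta>_def min_def field_simps)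
  from eventually_DQ_le[OF assms \<beta>(1,2)]
  show "\<forall>\<^sub>F n in sequentially. DQ \<rho> \<alpha> n (X n) < a"
    by eventually_elim (use \<beta>(3) in linarith)
qed

lemma DQ_elliptical_tendsto_0:
  fixes \<rho> :: "real \<Rightarrow> ('a \<Rightarrow> real) \<Rightarrow> real" and X :: "nat \<Rightarrow> nat \<Rightarrow> 'a \<Rightarrow> real"
    and \<mu> :: "nat \<Rightarrow> nat \<Rightarrow> real" and \<Sigma> :: "nat \<Rightarrow> nat \<Rightarrow> nat \<Rightarrow> real" and h :: "real \<Rightarrow> real"
  assumes psd: "\<And>n. n \<ge> 2 \<Longrightarrow> psd n (\<Sigma> n)"
    and pos: "\<And>n. n \<ge> 2 \<Longrightarrow> (\<Sum>i<n. \<Sum>j<n. \<Sigma> n i j) > 0"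
    and AC0: "(\<lambda>n. AC n (\<Sigma> n)) \<longlonglongrightarrow> 0"
    and law: "\<And>n t \<gamma>. n \<ge> 2 \<Longrightarrow> 0 < \<gamma> \<Longrightarrow> \<gamma> < 1 \<Longrightarrow>
      \<rho> \<gamma> (\<lambda>\<omega>. \<Sum>i<n. t i * X n i \<omega>) = (\<Sum>i<n. t i * \<mu> n i) + sqrt (qform n (\<Sigma> n) t) * h \<gamma>"
    and \<alpha>: "0 < \<alpha>" "\<alpha> < 1" "h \<alpha> > 0"
  shows "(\<lambda>n. DQ \<rho> \<alpha> n (X n)) \<longlonglongrightarrow> 0"
proof -
  define d where "d n = (\<Sum>i<n. sqrt (\<Sigma> n i i))" for n
  have d_pos: "d n > 0" if n: "n \<ge> 2" for n
  proof -
    obtain i where "i < n" "\<Sigma> n i i > 0"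
      using psd_ex_diag_pos[OF psd[OF n]] pos[OF n] by auto
    then show ?thesis
      unfolding d_def using psd_diag_nonneg[OF psd[OF n]] by (intro sum_pos2[of _ i]) auto
  qed
  have affine: "\<forall>\<^sub>F n in sequentially.
      (\<forall>\<gamma>\<in>{0<..<1}. \<rho> \<gamma> (\<lambda>\<omega>. \<Sum>i<n. X n i \<omega>)
         = (\<Sum>i<n. \<mu> n i) + sqrt (\<Sum>i<n. \<Sum>j<n. \<Sigma> n i j) * h \<gamma>)
      \<and> (\<Sum>i<n. \<rho> \<alpha> (X n i)) = (\<Sum>i<n. \<mu> n i) + d n * h \<alpha>
      \<and> d n > 0 \<and> sqrt (\<Sum>i<n. \<Sum>j<n. \<Sigma> n i j) \<ge> 0"
  proof (rule eventually_sequentiallyI[of 2], intro conjI ballI)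
    fix n :: nat
    assume n: "2 \<le> n"
    show "\<rho> \<gamma> (\<lambda>\<omega>. \<Sum>i<n. X n i \<omega>) = (\<Sum>i<n. \<mu> n i) + sqrt (\<Sum>i<n. \<Sum>j<n. \<Sigma> n i j) * h \<gamma>"
      if "\<gamma> \<in> {0<..<1}" for \<gamma>
      using law[OF n, of \<gamma> "\<lambda>_. 1"] that by (simp add: qform_const_one)
    have "\<rho> \<alpha> (X n i) = \<mu> n i + sqrt (\<Sigma> n i i) * h \<alpha>" if "i < n" for i
      using law[OF n \<alpha>(1,2), of "\<lambda>k. of_bool (k = i)"] that
      by (simp add: sum_of_bool_eq_mult qform_unit_vector)
    then show "(\<Sum>i<n. \<rho> \<alpha> (X n i)) = (\<Sum>i<n. \<mu> n i) + d n * h \<alpha>"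
      by (simp add: d_def sum.distrib sum_distrib_right)
    show "d n > 0"
      using d_pos[OF n] .
    show "sqrt (\<Sum>i<n. \<Sum>j<n. \<Sigma> n i j) \<ge> 0"
      using pos[OF n] by simp
  qed
  have "sqrt (AC n (\<Sigma> n)) = sqrt (\<Sum>i<n. \<Sum>j<n. \<Sigma> n i j) / d n" if "n \<ge> 2" for n
    using d_pos[OF that] by (simp add: AC_def d_def real_sqrt_divide)
  then have "\<forall>\<^sub>F n in sequentially. sqrt (AC n (\<Sigma> n)) = sqrt (\<Sum>i<n. \<Sum>j<n. \<Sigma> n i j) / d n"
    by (intro eventually_sequentiallyI[of 2])
  then have "(\<lambda>n. sqrt (\<Sum>i<n. \<Sum>j<n. \<Sigma> n i j) / d n) \<longlonglongrightarrow> 0"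
    using tendsto_real_sqrt[OF AC0] tendsto_cong by force
  then show ?thesis
    by (rule DQ_tendsto_0[OF \<alpha>(1,3) affine])
qed

theorem proposition2:
  fixes M :: "'a measure" and \<tau> :: "real \<Rightarrow> real"
    and \<mu> :: "nat \<Rightarrow> nat \<Rightarrow> real" and \<Sigma> :: "nat \<Rightarrow> nat \<Rightarrow> nat \<Rightarrow> real"
    and X :: "nat \<Rightarrow> nat \<Rightarrow> 'a \<Rightarrow> real"
  assumes "prob_space M" and "atomless M"
    and Ycont: "\<And>N. real_distribution N \<Longrightarrow> (\<forall>t. char N t = complex_of_real (\<tau> (t\<^sup>2)))
                  \<Longrightarrow> (\<forall>x. isCont (cdf N) x)"
    and ell: "\<And>n. n \<ge> 2 \<Longrightarrow> elliptical M n (X n) (\<mu> n) (\<Sigma> n) \<tau>"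
    and pos: "\<And>n. n \<ge> 2 \<Longrightarrow> (\<Sum>i<n. \<Sum>j<n. \<Sigma> n i j) > 0"
    and AC0: "(\<lambda>n. AC n (\<Sigma> n)) \<longlonglongrightarrow> 0"
  shows "(\<forall>\<alpha>\<in>{0<..<1/2}. (\<lambda>n. DQ (VaR M) \<alpha> n (X n)) \<longlonglongrightarrow> 0)
       \<and> ((\<forall>N. real_distribution N \<longrightarrow> (\<forall>t. char N t = complex_of_real (\<tau> (t\<^sup>2)))
              \<longrightarrow> integrable N (\<lambda>y. y))
          \<longrightarrow> (\<forall>\<beta>\<in>{0<..<1}. (\<lambda>n. DQ (ES M) \<beta> n (X n)) \<longlonglongrightarrow> 0))"
proof -
  have psd: "psd n (\<Sigma> n)" if "n \<ge> 2" for n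
    using ell[OF that] unfolding elliptical_def by blast
  \<comment> \<open>A law with characteristic function \<open>\<tau> (u\<^sup>2)\<close> is obtained by standardising the sum of
    the two-dimensional vector.\<close>
  have "qform 2 (\<Sigma> 2) (\<lambda>_. 1) > 0"
    using pos[of 2] by (simp add: qform_const_one)
  then obtain N where N: "real_distribution N" and char_N: "\<And>u. char N u = complex_of_real (\<tau> (u\<^sup>2))"
    using elliptical_standard_distribution[OF \<open>prob_space M\<close> ell[of 2]] by auto
  interpret symmetric_distribution N
    using N char_N Ycont[OF N] distr_uminus_eq_if_char_even[OF N]
    by (simp add: symmetric_distribution_def symmetric_distribution_axioms_def)
  have "(\<lambda>n. DQ (VaR M) \<alpha> n (X n)) \<longlonglongrightarrow> 0" if "\<alpha> \<in> {0<..<1/2}" for \<alpha>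
    using that VaR_elliptical_lincomb[OF \<open>prob_space M\<close> ell N char_N]
    by (intro DQ_elliptical_tendsto_0[OF psd pos AC0, where h="\<lambda>\<gamma>. VaR N \<gamma> (\<lambda>y. y)"])
       (auto intro: VaR_id_pos)
  moreover have "(\<lambda>n. DQ (ES M) \<beta> n (X n)) \<longlonglongrightarrow> 0"
    if "integrable N (\<lambda>y. y)" "\<beta> \<in> {0<..<1}" for \<beta>
    using that ES_elliptical_lincomb[OF \<open>prob_space M\<close> ell N char_N]
    by (intro DQ_elliptical_tendsto_0[OF psd pos AC0, where h="\<lambda>\<gamma>. ES N \<gamma> (\<lambda>y. y)"])
       (auto intro: ES_id_pos)
  ultimately show ?thesis
    using N char_N by blast
qed

end
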